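(* A group $G$ satisfies the disjunctive identity $(x^2 = 1) \vee (y^2 = 1) \vee (xy = yx)$ (i.e. for all $x,y\in G$, at least one of $x^2=1$, $y^2=1$, $xy=yx$ holds) if and only if $G = A \rtimes B$, where $A$ is abelian and $B$ is either trivial or cyclic of order 2 acting by inversion on $A$.
   Context: A disjunctive identity (d-identity) of a group is a universally quantified formula $\forall x_1\dots x_n\,[(f_1=1)\vee\dots\vee(f_k=1)]$ with $f_i$ group words, required to be true for every substitution of group elements. The lemma is used in determining bases of d-identities of the dihedral groups $D_{2m}=\langle a,b\mid a^m=b^2=1,\ a^b=a^{-1}\rangle$. *)

theory Defs
  imports "HOL-Algebra.Algebra"
begin

definition satisfies_dident :: "('a, 'b) monoid_scheme \<Rightarrow> bool" where
  "satisfies_dident G \<longleftrightarrow>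
     (\<forall>x\<in>carrier G. \<forall>y\<in>carrier G.
        x \<otimes>\<^bsub>G\<^esub> x = \<one>\<^bsub>G\<^esub> \<or> y \<otimes>\<^bsub>G\<^esub> y = \<one>\<^bsub>G\<^esub>
        \<or> x \<otimes>\<^bsub>G\<^esub> y = y \<otimes>\<^bsub>G\<^esub> x)"

definition internal_semidirect :: "('a, 'b) monoid_scheme \<Rightarrow> 'a set \<Rightarrow> 'a set \<Rightarrow> bool" where
  "internal_semidirect G A B \<longleftrightarrow>
     A \<lhd> G \<and> subgroup B G \<and> A \<inter> B = {\<one>\<^bsub>G\<^esub>} \<and> A <#>\<^bsub>G\<^esub> B = carrier G"

end

(* Let S be the set of elements whose square is not 1 and A its centralizer; the
   identity says exactly that S is contained in A.  A is abelian: two of its elements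
   commute unless both are involutions, and then their product either lies in S, so
   commutes with them, or is an involution as well.  An element h outside A is an
   involution, and so is h a for every a in A, which forces h a h^-1 = a^-1; in
   particular A is normal.  If g and h both lie outside A, they both invert S, so h g
   centralizes S and lies in A: hence A has index at most 2, and any g outside A gives
   the complement {1, g}.  Conversely, in such a semidirect product every element a b
   outside A satisfies (a b)^2 = a (b a b^-1) = 1. *)

theory Submission
  imports Defs
begin

definition centralizer :: "('a, 'b) monoid_scheme \<Rightarrow> 'a set \<Rightarrow> 'a set" where
  "centralizer G S = {x \<in> carrier G. \<forall>s\<in>S. x \<otimes>\<^bsub>G\<^esub> s = s \<otimes>\<^bsub>G\<^esub> x}"

definition nontrivial_square_elems :: "('a, 'b) monoid_scheme \<Rightarrow> 'a set" where
  "nontrivial_square_elems G = {x \<in> carrier G. x \<otimes>\<^bsub>G\<^esub> x \<noteq> \<one>\<^bsub>G\<^esub>}"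

context group
begin

lemma commute_if_commutes_with_mult:
  assumes "x \<in> carrier G" "y \<in> carrier G" "x \<otimes> (x \<otimes> y) = (x \<otimes> y) \<otimes> x"
  shows "x \<otimes> y = y \<otimes> x"
  using assms by (metis m_assoc m_closed l_cancel)

lemma involutions_commute_if_mult_involution:
  assumes "x \<in> carrier G" "y \<in> carrier G"
    and "x \<otimes> x = \<one>" "y \<otimes> y = \<one>" "(x \<otimes> y) \<otimes> (x \<otimes> y) = \<one>"
  shows "x \<otimes> y = y \<otimes> x"
proof -
  have "x \<otimes> y = inv (x \<otimes> y)" using assms by (simp add: inv_equality)
  also have "\<dots> = inv y \<otimes> inv x" using assms by (simp add: inv_mult_group)
  also have "\<dots> = y \<otimes> x" using assms by (simp add: inv_equality)
  finally show ?thesis .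
qed

lemma conj_eq_inv_if_mult_involution:
  assumes "h \<in> carrier G" "a \<in> carrier G"
    and "h \<otimes> h = \<one>" "(h \<otimes> a) \<otimes> (h \<otimes> a) = \<one>"
  shows "h \<otimes> a \<otimes> inv h = inv a"
proof -
  have "inv h = h" using assms by (simp add: inv_equality)
  moreover have "(h \<otimes> a \<otimes> h) \<otimes> a = \<one>" using assms by (simp add: m_assoc)
  ultimately show ?thesis using assms by (simp add: inv_equality)
qed

lemma mult_commute_if_both_conj_eq_inv:
  assumes "g \<in> carrier G" "h \<in> carrier G" "a \<in> carrier G"
    and "g \<otimes> a \<otimes> inv g = inv a" "h \<otimes> a \<otimes> inv h = inv a"
  shows "(h \<otimes> g) \<otimes> a = a \<otimes> (h \<otimes> g)"
proof -
  have "(h \<otimes> g) \<otimes> a \<otimes> inv (h \<otimes> g) = h \<otimes> (g \<otimes> a \<otimes> inv g) \<otimes> inv h"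
    using assms(1-3) by (simp add: inv_mult_group m_assoc)
  also have "\<dots> = h \<otimes> inv a \<otimes> inv h" using assms(4) by simp
  also have "\<dots> = inv (h \<otimes> a \<otimes> inv h)"
    using assms(1-3) by (simp add: inv_mult_group m_assoc)
  also have "\<dots> = a" using assms(3,5) by simp
  finally have "a = (h \<otimes> g) \<otimes> a \<otimes> inv (h \<otimes> g)" ..
  then show ?thesis using assms(1-3) by (simp add: inv_solve_right)
qed

lemma inv_commute:
  assumes "x \<in> carrier G" "s \<in> carrier G" "x \<otimes> s = s \<otimes> x"
  shows "inv x \<otimes> s = s \<otimes> inv x"
  using assms by (metis inv_solve_left' inv_solve_right' m_assoc m_closed inv_closed)

lemma centralizer_commute:
  "x \<in> centralizer G S \<Longrightarrow> s \<in> S \<Longrightarrow> x \<otimes> s = s \<otimes> x"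
  by (simp add: centralizer_def)

lemma centralizer_subgroup:
  assumes "S \<subseteq> carrier G"
  shows "subgroup (centralizer G S) G"
proof (rule subgroupI)
  show "centralizer G S \<subseteq> carrier G" by (auto simp: centralizer_def)
  have "\<one> \<in> centralizer G S" using assms by (auto simp: centralizer_def)
  then show "centralizer G S \<noteq> {}" by blast
  show "inv x \<in> centralizer G S" if "x \<in> centralizer G S" for x
    using that assms inv_commute by (auto simp: centralizer_def)
  show "x \<otimes> y \<in> centralizer G S" if x: "x \<in> centralizer G S" and y: "y \<in> centralizer G S" for x y
  proof -
    have "x \<otimes> y \<otimes> s = s \<otimes> (x \<otimes> y)" if "s \<in> S" for s
    proof -
      have carr: "x \<in> carrier G" "y \<in> carrier G" "s \<in> carrier G"
        using x y \<open>s \<in> S\<close> assms by (auto simp: centralizer_def)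
      have "x \<otimes> y \<otimes> s = x \<otimes> (s \<otimes> y)"
        using y \<open>s \<in> S\<close> carr by (simp add: centralizer_def m_assoc)
      also have "\<dots> = s \<otimes> (x \<otimes> y)"
        using x \<open>s \<in> S\<close> carr by (simp add: centralizer_def flip: m_assoc)
      finally show ?thesis .
    qed
    then show ?thesis using x y by (auto simp: centralizer_def)
  qed
qed

lemma nontrivial_square_elems_subset_centralizer:
  assumes "satisfies_dident G"
  shows "nontrivial_square_elems G \<subseteq> centralizer G (nontrivial_square_elems G)"
  using assms by (auto simp: satisfies_dident_def nontrivial_square_elems_def centralizer_def)

lemma centralizer_nontrivial_square_elems_commute:
  assumes x: "x \<in> centralizer G (nontrivial_square_elems G)"
    and y: "y \<in> centralizer G (nontrivial_square_elems G)"
  shows "x \<otimes> y = y \<otimes> x"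
proof -
  have carr: "x \<in> carrier G" "y \<in> carrier G" using x y by (auto simp: centralizer_def)
  consider "x \<in> nontrivial_square_elems G \<or> y \<in> nontrivial_square_elems G"
    | "x \<otimes> y \<in> nontrivial_square_elems G" "x \<otimes> x = \<one>"
    | "x \<otimes> x = \<one>" "y \<otimes> y = \<one>" "x \<otimes> y \<otimes> (x \<otimes> y) = \<one>"
    using carr by (auto simp: nontrivial_square_elems_def)
  then show ?thesis
  proof cases
    case 1
    then show ?thesis using x y centralizer_commute by metis
  next
    case 2
    have "x \<otimes> (x \<otimes> y) = (x \<otimes> y) \<otimes> x" using x 2(1) by (rule centralizer_commute)
    then show ?thesis by (rule commute_if_commutes_with_mult[OF carr])
  next
    case 3
    then show ?thesis by (rule involutions_commute_if_mult_involution[OF carr])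
  qed
qed

lemma comm_group_centralizer_nontrivial_square_elems:
  "comm_group (G\<lparr>carrier := centralizer G (nontrivial_square_elems G)\<rparr>)"
proof -
  have "subgroup (centralizer G (nontrivial_square_elems G)) G"
    by (rule centralizer_subgroup) (auto simp: nontrivial_square_elems_def)
  then interpret C: group "G\<lparr>carrier := centralizer G (nontrivial_square_elems G)\<rparr>"
    by (rule subgroup_imp_group)
  show ?thesis
    by (rule C.group_comm_groupI) (simp add: centralizer_nontrivial_square_elems_commute)
qed

lemma square_eq_one_outside:
  assumes "nontrivial_square_elems G \<subseteq> H" "h \<in> carrier G" "h \<notin> H"
  shows "h \<otimes> h = \<one>"
  using assms by (auto simp: nontrivial_square_elems_def)

lemma conj_eq_inv_outside:
  assumes H: "subgroup H G" "nontrivial_square_elems G \<subseteq> H"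
    and h: "h \<in> carrier G" "h \<notin> H" and a: "a \<in> H"
  shows "h \<otimes> a \<otimes> inv h = inv a"
proof -
  have a_carr: "a \<in> carrier G" using H(1) a by (rule subgroup.mem_carrier)
  have "h \<otimes> a \<notin> H"
  proof
    assume "h \<otimes> a \<in> H"
    then have "h \<otimes> a \<otimes> inv a \<in> H" using H(1) a by (simp add: subgroup.m_closed subgroup.m_inv_closed)
    then show False using h a_carr by (simp add: m_assoc)
  qed
  then show ?thesis
    using assms a_carr by (intro conj_eq_inv_if_mult_involution square_eq_one_outside[of H]) auto
qed

lemma normal_if_nontrivial_square_elems_subset:
  assumes "subgroup H G" "nontrivial_square_elems G \<subseteq> H"
  shows "H \<lhd> G"
  unfolding normal_inv_iff
proof (intro conjI ballI assms(1))
  fix x a assume x: "x \<in> carrier G" and a: "a \<in> H"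
  show "x \<otimes> a \<otimes> inv x \<in> H"
  proof (cases "x \<in> H")
    case True
    then show ?thesis using assms(1) a by (simp add: subgroup.m_closed subgroup.m_inv_closed)
  next
    case False
    then show ?thesis using assms x a by (simp add: conj_eq_inv_outside subgroup.m_inv_closed)
  qed
qed

lemma mult_outside_mem_centralizer:
  assumes S: "nontrivial_square_elems G \<subseteq> centralizer G (nontrivial_square_elems G)"
    and g: "g \<in> carrier G" "g \<notin> centralizer G (nontrivial_square_elems G)"
    and h: "h \<in> carrier G" "h \<notin> centralizer G (nontrivial_square_elems G)"
  shows "h \<otimes> g \<in> centralizer G (nontrivial_square_elems G)"
proof -
  have sub: "subgroup (centralizer G (nontrivial_square_elems G)) G"
    by (rule centralizer_subgroup) (auto simp: nontrivial_square_elems_def)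
  have "(h \<otimes> g) \<otimes> s = s \<otimes> (h \<otimes> g)" if s: "s \<in> nontrivial_square_elems G" for s
    using sub S g h s
    by (intro mult_commute_if_both_conj_eq_inv conj_eq_inv_outside)
      (auto simp: nontrivial_square_elems_def)
  then show ?thesis using g h by (simp add: centralizer_def)
qed

lemma internal_semidirect_carrier_one: "internal_semidirect G (carrier G) {\<one>}"
  by (simp add: internal_semidirect_def normal_inv_iff subgroup_self triv_subgroup
      flip: r_coset_eq_set_mult)

lemma internal_semidirect_order_two:
  assumes H: "H \<lhd> G" and g: "g \<in> carrier G" "g \<notin> H" "g \<otimes> g = \<one>"
    and mult_g: "\<And>h. h \<in> carrier G \<Longrightarrow> h \<notin> H \<Longrightarrow> h \<otimes> g \<in> H"
  shows "internal_semidirect G H {\<one>, g}"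
proof -
  have sub: "subgroup H G" using H by (rule normal_imp_subgroup)
  have "inv g = g" using g by (simp add: inv_equality)
  then have "subgroup {\<one>, g} G" using g by (intro subgroupI) auto
  moreover have "H <#> {\<one>, g} = carrier G"
  proof
    show "H <#> {\<one>, g} \<subseteq> carrier G"
      using sub g by (auto simp: set_mult_def dest: subgroup.mem_carrier)
    show "carrier G \<subseteq> H <#> {\<one>, g}"
    proof
      fix h assume h: "h \<in> carrier G"
      show "h \<in> H <#> {\<one>, g}"
      proof (cases "h \<in> H")
        case True
        then show ?thesis using h by (force simp: set_mult_def)
      next
        case False
        have "h = (h \<otimes> g) \<otimes> g" using h g by (simp add: m_assoc)
        then show ?thesis using mult_g[OF h False] by (force simp: set_mult_def)
      qed
    qed
  qed
  moreover have "H \<inter> {\<one>, g} = {\<one>}" using sub g by (auto simp: subgroup.one_closed)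
  ultimately show ?thesis using H by (simp add: internal_semidirect_def)
qed

lemma semidirect_inversion_if_dident:
  assumes "satisfies_dident G"
  shows "\<exists>A B. internal_semidirect G A B \<and> comm_group (G\<lparr>carrier := A\<rparr>) \<and>
       (B = {\<one>} \<or>
        (\<exists>b. B = {\<one>, b} \<and> b \<noteq> \<one> \<and> b \<otimes> b = \<one> \<and>
             (\<forall>a\<in>A. b \<otimes> a \<otimes> inv b = inv a)))"
proof -
  define A where "A = centralizer G (nontrivial_square_elems G)"
  have S_sub: "nontrivial_square_elems G \<subseteq> A"
    unfolding A_def using assms by (rule nontrivial_square_elems_subset_centralizer)
  have sub: "subgroup A G"
    unfolding A_def by (rule centralizer_subgroup) (auto simp: nontrivial_square_elems_def)
  have comm: "comm_group (G\<lparr>carrier := A\<rparr>)"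
    unfolding A_def by (rule comm_group_centralizer_nontrivial_square_elems)
  show ?thesis
  proof (cases "A = carrier G")
    case True
    then show ?thesis using comm internal_semidirect_carrier_one by blast
  next
    case False
    then obtain g where g: "g \<in> carrier G" "g \<notin> A" using sub subgroup.subset by blast
    have "g \<otimes> g = \<one>" using S_sub g by (rule square_eq_one_outside)
    moreover have "g \<noteq> \<one>" using g sub subgroup.one_closed by blast
    moreover have "\<forall>a\<in>A. g \<otimes> a \<otimes> inv g = inv a"
      using sub S_sub g by (blast intro: conj_eq_inv_outside)
    moreover have "internal_semidirect G A {\<one>, g}"
      using sub S_sub g \<open>g \<otimes> g = \<one>\<close>
      by (intro internal_semidirect_order_two normal_if_nontrivial_square_elems_subset)
        (auto simp: A_def intro: mult_outside_mem_centralizer)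
    ultimately show ?thesis using comm by blast
  qed
qed

lemma dident_if_abelian_and_involutions_outside:
  assumes "comm_group (G\<lparr>carrier := A\<rparr>)"
    and "\<And>x. x \<in> carrier G \<Longrightarrow> x \<notin> A \<Longrightarrow> x \<otimes> x = \<one>"
  shows "satisfies_dident G"
proof -
  interpret A: comm_group "G\<lparr>carrier := A\<rparr>" by (rule assms(1))
  show ?thesis using assms(2) A.m_comm by (auto simp: satisfies_dident_def)
qed

lemma square_eq_one_outside_semidirect_inversion:
  assumes "internal_semidirect G A {\<one>, b}" "b \<otimes> b = \<one>" "\<forall>a\<in>A. b \<otimes> a \<otimes> inv b = inv a"
    and x: "x \<in> carrier G" "x \<notin> A"
  shows "x \<otimes> x = \<one>"
proof -
  have A: "A \<subseteq> carrier G" and b: "b \<in> carrier G" and prod: "A <#> {\<one>, b} = carrier G"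
    using assms(1) by (auto simp: internal_semidirect_def dest: normal_imp_subgroup subgroup.subset)
  have "x \<in> A <#> {\<one>, b}" using x(1) prod by simp
  then obtain a c where a: "a \<in> A" "c \<in> {\<one>, b}" "x = a \<otimes> c"
    unfolding set_mult_def by blast
  then have a: "a \<in> A" "x = a \<otimes> b" using x A by auto
  have a_carr: "a \<in> carrier G" using a(1) A by blast
  have "inv b = b" using b assms(2) by (simp add: inv_equality)
  have "x \<otimes> x = a \<otimes> (b \<otimes> a \<otimes> inv b)"
    using a(2) a_carr b \<open>inv b = b\<close> by (simp add: m_assoc)
  also have "\<dots> = \<one>" using assms(3) a a_carr by simp
  finally show ?thesis .
qed

lemma dident_if_semidirect_inversion:
  assumes "internal_semidirect G A B" "comm_group (G\<lparr>carrier := A\<rparr>)"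
    and "B = {\<one>} \<or>
        (\<exists>b. B = {\<one>, b} \<and> b \<noteq> \<one> \<and> b \<otimes> b = \<one> \<and>
             (\<forall>a\<in>A. b \<otimes> a \<otimes> inv b = inv a))"
  shows "satisfies_dident G"
proof (rule dident_if_abelian_and_involutions_outside[OF assms(2)])
  fix x assume x: "x \<in> carrier G" "x \<notin> A"
  from assms(3) show "x \<otimes> x = \<one>"
  proof
    assume "B = {\<one>}"
    then have "A = carrier G"
      using assms(1) by (auto simp: internal_semidirect_def normal_def subgroup.subset
          simp flip: r_coset_eq_set_mult)
    then show ?thesis using x by blast
  next
    assume "\<exists>b. B = {\<one>, b} \<and> b \<noteq> \<one> \<and> b \<otimes> b = \<one> \<and> (\<forall>a\<in>A. b \<otimes> a \<otimes> inv b = inv a)"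
    then show ?thesis
      using assms(1) x by (blast intro: square_eq_one_outside_semidirect_inversion)
  qed
qed

end

theorem lemma5:
  fixes G (structure)
  assumes "group G"
  shows "satisfies_dident G \<longleftrightarrow>
    (\<exists>A B. internal_semidirect G A B \<and> comm_group (G\<lparr>carrier := A\<rparr>) \<and>
       (B = {\<one>} \<or>
        (\<exists>b. B = {\<one>, b} \<and> b \<noteq> \<one> \<and> b \<otimes> b = \<one> \<and>
             (\<forall>a\<in>A. b \<otimes> a \<otimes> inv b = inv a))))"
  using group.semidirect_inversion_if_dident[OF assms] group.dident_if_semidirect_inversion[OF assms]
  by blast

end
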